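(* Let $g$ be a nondegenerate symmetric bilinear form on $\mathbb{R}^n$ with $n_-(g)=1$, $R:[0,1]\to\mathcal L(\mathbb{R}^n)$ a continuous map of $g$-symmetric operators, $P\subset\mathbb{R}^n$ a subspace on which $g$ is nondegenerate, $S:P\to P$ $g$-symmetric, and $Y$ a solution of $Y''=RY$ with $g(Y,Y)<0$ on $[0,1]$. Then for all $t\in]0,1]$ the spaces $\mathcal K_t$ and $\mathcal S_t$ are orthogonal with respect to $I_t$; moreover $\hat{\mathcal K}_0$ and $\hat{\mathcal S}_0$ are orthogonal with respect to $C_0$.
   Context: For $t\in]0,1]$: $\mathcal H_t=\{V\in H^1([0,t],\mathbb{R}^n):V(0)\in P,V(t)=0\}$, $I_t(V,W)=\int_0^t[g(V',W')+g(RV,W)]ds-g(S[V(0)],W(0))$, $\mathcal K_t=\{V\in\mathcal H_t:g(V',Y)-g(V,Y')\text{ constant a.e. on }[0,t]\}$, $\mathcal S_t=\{f\,Y|_{[0,t]}:f\in H^1_0([0,t],\mathbb{R})\}$ ($H^1_0$: $H^1$ functions vanishing at both endpoints). $\mathcal H=\mathcal H_1$, $\hat{\mathcal K}_0=\{\hat V\in\mathcal H:g(\hat V',Y(0))\text{ constant a.e.}\}$, $\hat{\mathcal S}_0=\{\hat f\,Y(0):\hat f\in H^1_0([0,1],\mathbb{R})\}$, $C_0(\hat V,\hat W)=\int_0^1g(\hat V',\hat W')du$. *)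

theory Defs
  imports "HOL-Analysis.Analysis"
begin

definition gform :: "real^'n^'n \<Rightarrow> real^'n \<Rightarrow> real^'n \<Rightarrow> real" where
  "gform G x y = x \<bullet> (G *v y)"

definition sym_bilinear_nondeg :: "real^'n^'n \<Rightarrow> bool" where
  "sym_bilinear_nondeg G \<longleftrightarrow> (\<forall>x y. gform G x y = gform G y x)
     \<and> (\<forall>x. (\<forall>y. gform G x y = 0) \<longrightarrow> x = 0)"

definition neg_index :: "real^'n^'n \<Rightarrow> nat" where
  "neg_index G = Max {dim W | W. subspace W \<and> (\<forall>x\<in>W. x \<noteq> 0 \<longrightarrow> gform G x x < 0)}"

text \<open>H^1([0,t], E): V is absolutely continuous with square-integrable (weak) derivative V',
  i.e. V(s) = V(0) + int_0^s V' for s in [0,t]. V' is a representative of the weak derivative.\<close>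
definition H1 :: "real \<Rightarrow> (real \<Rightarrow> 'a::euclidean_space) \<Rightarrow> (real \<Rightarrow> 'a) \<Rightarrow> bool" where
  "H1 t V V' \<longleftrightarrow> set_borel_measurable lebesgue {0..t} V'
     \<and> set_integrable lebesgue {0..t} (\<lambda>s. (norm (V' s))\<^sup>2)
     \<and> (\<forall>s\<in>{0..t}. set_integrable lebesgue {0..s} V'
           \<and> V s = V 0 + (LINT u:{0..s}|lebesgue. V' u))"

definition Hsp :: "(real^'n) set \<Rightarrow> real \<Rightarrow> (real \<Rightarrow> real^'n) \<Rightarrow> (real \<Rightarrow> real^'n) \<Rightarrow> bool" where
  "Hsp P t V V' \<longleftrightarrow> H1 t V V' \<and> V 0 \<in> P \<and> V t = 0"

definition It :: "real^'n^'n \<Rightarrow> (real \<Rightarrow> real^'n^'n) \<Rightarrow> (real^'n \<Rightarrow> real^'n) \<Rightarrow> real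
    \<Rightarrow> (real \<Rightarrow> real^'n) \<Rightarrow> (real \<Rightarrow> real^'n) \<Rightarrow> (real \<Rightarrow> real^'n) \<Rightarrow> (real \<Rightarrow> real^'n) \<Rightarrow> real" where
  "It G R S t V V' W W' =
     (LINT s:{0..t}|lebesgue. gform G (V' s) (W' s) + gform G (R s *v V s) (W s))
     - gform G (S (V 0)) (W 0)"

definition Ksp :: "real^'n^'n \<Rightarrow> (real^'n) set \<Rightarrow> (real \<Rightarrow> real^'n) \<Rightarrow> (real \<Rightarrow> real^'n) \<Rightarrow> real
    \<Rightarrow> (real \<Rightarrow> real^'n) \<Rightarrow> (real \<Rightarrow> real^'n) \<Rightarrow> bool" where
  "Ksp G P Y Y' t V V' \<longleftrightarrow> Hsp P t V V'
     \<and> (\<exists>c. AE s in lebesgue. s \<in> {0..t} \<longrightarrow> gform G (V' s) (Y s) - gform G (V s) (Y' s) = c)"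

definition Ssp :: "(real \<Rightarrow> real^'n) \<Rightarrow> real \<Rightarrow> (real \<Rightarrow> real^'n) \<Rightarrow> (real \<Rightarrow> real^'n) \<Rightarrow> bool" where
  "Ssp Y t W W' \<longleftrightarrow> H1 t W W'
     \<and> (\<exists>f f'. H1 t f f' \<and> f 0 = 0 \<and> f t = 0 \<and> (\<forall>s\<in>{0..t}. W s = f s *\<^sub>R Y s))"

definition Khat0 :: "real^'n^'n \<Rightarrow> (real^'n) set \<Rightarrow> (real \<Rightarrow> real^'n)
    \<Rightarrow> (real \<Rightarrow> real^'n) \<Rightarrow> (real \<Rightarrow> real^'n) \<Rightarrow> bool" where
  "Khat0 G P Y V V' \<longleftrightarrow> Hsp P 1 V V'
     \<and> (\<exists>c. AE u in lebesgue. u \<in> {0..1} \<longrightarrow> gform G (V' u) (Y 0) = c)"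

definition Shat0 :: "(real \<Rightarrow> real^'n) \<Rightarrow> (real \<Rightarrow> real^'n) \<Rightarrow> (real \<Rightarrow> real^'n) \<Rightarrow> bool" where
  "Shat0 Y W W' \<longleftrightarrow> H1 1 W W'
     \<and> (\<exists>f f'. H1 1 f f' \<and> f 0 = 0 \<and> f 1 = 0 \<and> (\<forall>u\<in>{0..1}. W u = f u *\<^sub>R Y 0))"

definition C0 :: "real^'n^'n \<Rightarrow> (real \<Rightarrow> real^'n) \<Rightarrow> (real \<Rightarrow> real^'n) \<Rightarrow> real" where
  "C0 G V' W' = (LINT u:{0..1}|lebesgue. gform G (V' u) (W' u))"

end

(*
  Write W = f Y with f vanishing at both ends.  For V in K_t the Wronskian-type quantity
  g(V',Y) - g(V,Y') is a constant c, so with h = g(V,Y') the Jacobi equation Y'' = R Y and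
  the g-symmetry of R turn the integrand of I_t(V,W) into (f h)' + c f'; its integral is
  zero because f(0) = f(t) = 0, and the boundary term vanishes because W(0) = 0.  Freezing Y
  at Y(0) gives C_0(V,W) = c (f(1) - f(0)) = 0 in the same way.  Neither the index of g, nor
  P and S, nor the sign of g(Y,Y) play any role here.

  The analytic input is integration by parts for absolutely continuous functions, obtained
  from Fubini's theorem on the two triangles of a square, together with the a.e. uniqueness
  of the derivative of such a function.
*)

theory Submission
  imports Defs
begin

section \<open>A product of integrals as a sum over two triangles\<close>

lemma sigma_finite_measure_completion:
  assumes "sigma_finite_measure M"
  shows "sigma_finite_measure (completion M)"
proof
  obtain A :: "nat \<Rightarrow> 'a set" where "range A \<subseteq> sets M" "\<Union> (range A) = space M"
    "\<And>i. emeasure M (A i) \<noteq> \<infinity>"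
    using sigma_finite_measure.sigma_finite[OF assms] by metis
  then show "\<exists>A. countable A \<and> A \<subseteq> sets (completion M) \<and> \<Union> A = space (completion M)
      \<and> (\<forall>a\<in>A. emeasure (completion M) a \<noteq> \<infinity>)"
    by (intro exI[of _ "range A"]) auto
qed

interpretation lebesgue_pair: pair_sigma_finite "lebesgue :: real measure" "lebesgue :: real measure"
  by (intro pair_sigma_finite.intro sigma_finite_measure_completion sigma_finite_lborel)

lemma integral_mult_integral_eq_triangles:
  fixes \<alpha> \<beta> :: "real \<Rightarrow> real"
  assumes \<alpha>: "integrable lebesgue \<alpha>" and \<beta>: "integrable lebesgue \<beta>"
  shows "integrable lebesgue (\<lambda>s. \<alpha> s * (\<integral>u. \<beta> u * indicator {..s} u \<partial>lebesgue))"
    and "integrable lebesgue (\<lambda>u. \<beta> u * (\<integral>s. \<alpha> s * indicator {..<u} s \<partial>lebesgue))"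
    and "(\<integral>s. \<alpha> s * (\<integral>u. \<beta> u * indicator {..s} u \<partial>lebesgue) \<partial>lebesgue)
         + (\<integral>u. \<beta> u * (\<integral>s. \<alpha> s * indicator {..<u} s \<partial>lebesgue) \<partial>lebesgue)
       = (\<integral>s. \<alpha> s \<partial>lebesgue) * (\<integral>u. \<beta> u \<partial>lebesgue)"
proof -
  have [measurable]: "\<alpha> \<in> borel_measurable lebesgue" "\<beta> \<in> borel_measurable lebesgue"
    "(\<lambda>x::real. x) \<in> borel_measurable lebesgue"
    using \<alpha> \<beta> by (auto intro: measurable_completion)
  define F where "F s u = \<alpha> s * \<beta> u" for s u
  define L where "L s u = F s u * indicator {..s} u" for s u
  define U where "U s u = F s u * indicator {..<u} s" for s u
  have F: "integrable (lebesgue \<Otimes>\<^sub>M lebesgue) (case_prod F)"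
  proof (rule lebesgue_pair.Fubini_integrable)
    show "integrable lebesgue (\<lambda>s. \<integral>u. norm (case_prod F (s, u)) \<partial>lebesgue)"
      using \<alpha> by (simp add: F_def abs_mult)
    show "AE s in lebesgue. integrable lebesgue (\<lambda>u. case_prod F (s, u))"
      using \<beta> by (simp add: F_def)
  qed (unfold F_def, measurable)
  have L: "integrable (lebesgue \<Otimes>\<^sub>M lebesgue) (case_prod L)"
    by (rule Bochner_Integration.integrable_bound[OF F])
      (unfold L_def F_def, measurable, auto simp: abs_mult split: split_indicator)
  have U: "integrable (lebesgue \<Otimes>\<^sub>M lebesgue) (case_prod U)"
    by (rule Bochner_Integration.integrable_bound[OF F])
      (unfold U_def F_def, measurable, auto simp: abs_mult split: split_indicator)
  have inner_L: "(\<integral>u. L s u \<partial>lebesgue) = \<alpha> s * (\<integral>u. \<beta> u * indicator {..s} u \<partial>lebesgue)" for s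
    by (simp add: L_def F_def mult.assoc)
  have inner_U: "(\<integral>s. U s u \<partial>lebesgue) = \<beta> u * (\<integral>s. \<alpha> s * indicator {..<u} s \<partial>lebesgue)" for u
  proof -
    have "U s u = \<beta> u * (\<alpha> s * indicator {..<u} s)" for s
      by (simp add: U_def F_def ac_simps)
    then show ?thesis by simp
  qed
  show "integrable lebesgue (\<lambda>s. \<alpha> s * (\<integral>u. \<beta> u * indicator {..s} u \<partial>lebesgue))"
    using lebesgue_pair.integrable_fst[OF L] by (simp add: inner_L)
  show "integrable lebesgue (\<lambda>u. \<beta> u * (\<integral>s. \<alpha> s * indicator {..<u} s \<partial>lebesgue))"
    using lebesgue_pair.integrable_snd[OF U] by (simp add: inner_U)
  have "case_prod F = (\<lambda>p. case_prod L p + case_prod U p)"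
    by (auto simp: F_def L_def U_def split: split_indicator)
  then have "integral\<^sup>L (lebesgue \<Otimes>\<^sub>M lebesgue) (case_prod F)
      = integral\<^sup>L (lebesgue \<Otimes>\<^sub>M lebesgue) (case_prod L)
        + integral\<^sup>L (lebesgue \<Otimes>\<^sub>M lebesgue) (case_prod U)"
    using Bochner_Integration.integral_add[OF L U] by simp
  moreover have "integral\<^sup>L (lebesgue \<Otimes>\<^sub>M lebesgue) (case_prod F)
      = (\<integral>s. \<alpha> s \<partial>lebesgue) * (\<integral>u. \<beta> u \<partial>lebesgue)"
    using lebesgue_pair.integral_fst[OF F] by (simp add: F_def[abs_def])
  ultimately show "(\<integral>s. \<alpha> s * (\<integral>u. \<beta> u * indicator {..s} u \<partial>lebesgue) \<partial>lebesgue)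
         + (\<integral>u. \<beta> u * (\<integral>s. \<alpha> s * indicator {..<u} s \<partial>lebesgue) \<partial>lebesgue)
       = (\<integral>s. \<alpha> s \<partial>lebesgue) * (\<integral>u. \<beta> u \<partial>lebesgue)"
    using lebesgue_pair.integral_fst[OF L] lebesgue_pair.integral_snd[OF U] by (simp add: inner_L inner_U)
qed

section \<open>Functions with vanishing indefinite integrals\<close>

lemma AE_zero_if_tail_integrals_zero_lborel:
  fixes k :: "real \<Rightarrow> real"
  assumes k: "integrable lborel k" and tails: "\<And>x. (\<integral>y. k y * indicator {x<..} y \<partial>lborel) = 0"
  shows "AE x in lborel. k x = 0"
proof -
  have [measurable]: "k \<in> borel_measurable borel" using k by simp
  have tail_density: "emeasure (density lborel (\<lambda>y. ennreal (\<phi> y))) {x<..}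
      = ennreal (\<integral>y. \<phi> y * indicator {x<..} y \<partial>lborel)"
    if \<phi>: "integrable lborel \<phi>" "\<And>y. 0 \<le> \<phi> y" for \<phi> :: "real \<Rightarrow> real" and x :: real
  proof -
    have "emeasure (density lborel (\<lambda>y. ennreal (\<phi> y))) {x<..}
        = (\<integral>\<^sup>+y. ennreal (\<phi> y * indicator {x<..} y) \<partial>lborel)"
      using \<phi> by (subst emeasure_density) (auto intro!: nn_integral_cong split: split_indicator)
    also have "\<dots> = ennreal (\<integral>y. \<phi> y * indicator {x<..} y \<partial>lborel)"
      using \<phi> by (intro nn_integral_eq_integral integrable_real_mult_indicator) auto
    finally show ?thesis .
  qed
  \<comment> \<open>The positive and negative parts of k are densities of two finite measures
    that agree on all rays, hence coincide.\<close>
  let ?pos = "\<lambda>y. max 0 (k y)" and ?neg = "\<lambda>y. max 0 (- k y)"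
  have pos: "integrable lborel ?pos" and neg: "integrable lborel ?neg"
    using k by (auto intro: integrable_max)
  have "density lborel (\<lambda>y. ennreal (?pos y)) = density lborel (\<lambda>y. ennreal (?neg y))"
  proof (rule measure_eqI_lessThan)
    fix x :: real
    show "emeasure (density lborel (\<lambda>y. ennreal (?pos y))) {x<..} < \<infinity>"
      using tail_density[OF pos] by simp
    have "(\<lambda>y. k y * indicator {x<..} y) = (\<lambda>y. ?pos y * indicator {x<..} y - ?neg y * indicator {x<..} y)"
      by (auto simp: max_def fun_eq_iff)
    then have "(\<integral>y. ?pos y * indicator {x<..} y \<partial>lborel) = (\<integral>y. ?neg y * indicator {x<..} y \<partial>lborel)"
      using tails[of x] pos neg
      by (simp add: Bochner_Integration.integral_diff integrable_real_mult_indicator)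
    then show "emeasure (density lborel (\<lambda>y. ennreal (?pos y))) {x<..}
        = emeasure (density lborel (\<lambda>y. ennreal (?neg y))) {x<..}"
      using tail_density[OF pos] tail_density[OF neg] by simp
  qed auto
  then have "AE x in lborel. ennreal (?pos x) = ennreal (?neg x)"
    by (intro sigma_finite_measure.density_unique[OF sigma_finite_lborel]) auto
  then show ?thesis
  proof eventually_elim
    case (elim x)
    then have "max 0 (k x) = max 0 (- k x)" by (subst (asm) ennreal_inj) auto
    then show ?case by (auto simp: max_def split: if_splits)
  qed
qed

lemma AE_zero_if_tail_integrals_zero:
  fixes k :: "real \<Rightarrow> real"
  assumes k: "integrable lebesgue k" and tails: "\<And>x. (\<integral>y. k y * indicator {x<..} y \<partial>lebesgue) = 0"
  shows "AE x in lebesgue. k x = 0"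
proof -
  obtain k0 where k0_borel[measurable]: "k0 \<in> borel_measurable lborel" and k_k0_lborel: "AE x in lborel. k x = k0 x"
    using completion_ex_borel_measurable_real k by blast
  have k_k0: "AE x in lebesgue. k x = k0 x" using k_k0_lborel by (rule AE_completion)
  have k0_lebesgue[measurable]: "k0 \<in> borel_measurable lebesgue" by (rule measurable_completion) simp
  have k0: "integrable lborel k0"
    using integrable_cong_AE_imp[OF k k0_lebesgue k_k0] integrable_completion[OF k0_borel] by simp
  have "(\<integral>y. k0 y * indicator {x<..} y \<partial>lborel) = 0" for x
  proof -
    have "(\<integral>y. k0 y * indicator {x<..} y \<partial>lborel) = (\<integral>y. k0 y * indicator {x<..} y \<partial>lebesgue)"
      by (rule integral_completion[symmetric]) measurable
    also have "\<dots> = (\<integral>y. k y * indicator {x<..} y \<partial>lebesgue)"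
      using k k_k0 by (intro integral_cong_AE)
        (auto intro!: borel_measurable_times borel_measurable_indicator k0_lebesgue)
    finally show ?thesis using tails by simp
  qed
  then have "AE x in lborel. k0 x = 0" by (rule AE_zero_if_tail_integrals_zero_lborel[OF k0])
  then have "AE x in lebesgue. k0 x = 0" by (rule AE_completion)
  with k_k0 show ?thesis by eventually_elim simp
qed

lemma AE_zero_if_indefinite_integrals_zero:
  fixes h :: "real \<Rightarrow> real"
  assumes h: "set_integrable lebesgue {0..t} h"
    and zero: "\<forall>s\<in>{0..t}. (LINT u:{0..s}|lebesgue. h u) = 0"
  shows "AE x in lebesgue. x \<in> {0..t} \<longrightarrow> h x = 0"
proof -
  define k where "k x = indicator {0..t} x * h x" for x
  have k: "integrable lebesgue k" using h by (simp add: k_def[abs_def] set_integrable_def)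
  have zero': "(LINT u:{0..m}|lebesgue. h u) = 0" if "m \<le> t" for m
    using zero that by (cases "0 \<le> m") (auto simp: set_lebesgue_integral_def)
  have "(\<integral>y. k y \<partial>lebesgue) = 0"
    using zero'[of t] by (simp add: k_def set_lebesgue_integral_def)
  have tails: "(\<integral>y. k y * indicator {x<..} y \<partial>lebesgue) = 0" for x
  proof -
    have "(\<lambda>y. k y * indicator {x<..} y) = (\<lambda>y. k y - indicator {0..min x t} y * h y)"
      by (auto simp: k_def fun_eq_iff split: split_indicator)
    moreover have "set_integrable lebesgue {0..min x t} h"
      by (rule set_integrable_subset[OF h]) auto
    ultimately show ?thesis
      using k \<open>(\<integral>y. k y \<partial>lebesgue) = 0\<close> zero'[of "min x t"]
      by (simp add: Bochner_Integration.integral_diff set_integrable_def set_lebesgue_integral_def)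
  qed
  have k_h: "k x = h x" if "x \<in> {0..t}" for x
    using that by (simp add: k_def)
  have "AE x in lebesgue. k x = 0" by (rule AE_zero_if_tail_integrals_zero[OF k tails])
  then show ?thesis by (rule eventually_mono) (metis k_h)
qed

section \<open>Absolutely continuous real functions on an interval\<close>

definition indef_integral_on :: "real \<Rightarrow> (real \<Rightarrow> real) \<Rightarrow> (real \<Rightarrow> real) \<Rightarrow> bool" where
  "indef_integral_on t a a' \<longleftrightarrow> set_integrable lebesgue {0..t} a'
     \<and> (\<forall>s\<in>{0..t}. a s = a 0 + (LINT u:{0..s}|lebesgue. a' u))"

lemma indef_integral_on_integrable: "indef_integral_on t a a' \<Longrightarrow> set_integrable lebesgue {0..t} a'"
  unfolding indef_integral_on_def by blast

lemma indef_integral_on_eq: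
  "indef_integral_on t a a' \<Longrightarrow> s \<in> {0..t} \<Longrightarrow> a s = a 0 + (LINT u:{0..s}|lebesgue. a' u)"
  unfolding indef_integral_on_def by blast

lemma indef_integral_on_continuous:
  assumes "indef_integral_on t a a'"
  shows "continuous_on {0..t} a"
proof -
  have a': "set_integrable lebesgue {0..t} a'" by (rule indef_integral_on_integrable[OF assms])
  have "continuous_on {0..t} (\<lambda>s. a 0 + integral {0..s} a')"
    using a' by (intro continuous_intros indefinite_integral_continuous_1 set_lebesgue_integral_eq_integral(1))
  moreover have "a 0 + integral {0..s} a' = a s" if "s \<in> {0..t}" for s
  proof -
    have "set_integrable lebesgue {0..s} a'" by (rule set_integrable_subset[OF a']) (use that in auto)
    then show ?thesis
      using indef_integral_on_eq[OF assms that] by (simp add: set_lebesgue_integral_eq_integral(2))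
  qed
  ultimately show ?thesis by (rule continuous_on_eq) simp
qed

lemma indef_integral_on_subinterval:
  assumes "indef_integral_on t a a'" "s \<le> t"
  shows "indef_integral_on s a a'"
  unfolding indef_integral_on_def
proof (intro conjI ballI)
  show "set_integrable lebesgue {0..s} a'"
    using assms by (auto intro: set_integrable_subset[OF indef_integral_on_integrable])
  show "a r = a 0 + (LINT u:{0..r}|lebesgue. a' u)" if "r \<in> {0..s}" for r
    using that assms by (intro indef_integral_on_eq[OF assms(1)]) auto
qed

lemma indef_integral_on_cong:
  assumes "indef_integral_on t a a'"
    and "\<And>s. s \<in> {0..t} \<Longrightarrow> b s = a s" "\<And>s. s \<in> {0..t} \<Longrightarrow> b' s = a' s"
  shows "indef_integral_on t b b'"
  unfolding indef_integral_on_def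
proof (intro conjI ballI)
  have "set_integrable lebesgue {0..t} b' \<longleftrightarrow> set_integrable lebesgue {0..t} a'"
    using assms(3) by (intro set_integrable_cong) auto
  then show "set_integrable lebesgue {0..t} b'"
    using indef_integral_on_integrable[OF assms(1)] by simp
  fix s assume s: "s \<in> {0..t}"
  have "(LINT u:{0..s}|lebesgue. b' u) = (LINT u:{0..s}|lebesgue. a' u)"
    using s assms(3) by (intro set_lebesgue_integral_cong) auto
  moreover have "b 0 = a 0" "b s = a s" using assms(2) s by auto
  ultimately show "b s = b 0 + (LINT u:{0..s}|lebesgue. b' u)"
    using indef_integral_on_eq[OF assms(1) s] by simp
qed

lemma indef_integral_on_const: "indef_integral_on t (\<lambda>s. c) (\<lambda>s. 0)"
  unfolding indef_integral_on_def by (simp add: set_integrable_def)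

lemma indef_integral_on_add:
  assumes a: "indef_integral_on t a a'" and b: "indef_integral_on t b b'"
  shows "indef_integral_on t (\<lambda>s. a s + b s) (\<lambda>s. a' s + b' s)"
  unfolding indef_integral_on_def
proof (intro conjI ballI)
  show "set_integrable lebesgue {0..t} (\<lambda>s. a' s + b' s)"
    using a b by (intro set_integral_add indef_integral_on_integrable)
  fix s assume s: "s \<in> {0..t}"
  have "set_integrable lebesgue {0..s} a'" "set_integrable lebesgue {0..s} b'"
    using s by (auto intro!: set_integrable_subset[OF indef_integral_on_integrable] a b)
  then have "(LINT u:{0..s}|lebesgue. a' u + b' u)
      = (LINT u:{0..s}|lebesgue. a' u) + (LINT u:{0..s}|lebesgue. b' u)"
    by (rule set_integral_add(2))
  then show "a s + b s = a 0 + b 0 + (LINT u:{0..s}|lebesgue. a' u + b' u)"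
    using indef_integral_on_eq[OF a s] indef_integral_on_eq[OF b s] by linarith
qed

lemma indef_integral_on_sum:
  assumes "finite I" "\<And>i. i \<in> I \<Longrightarrow> indef_integral_on t (a i) (a' i)"
  shows "indef_integral_on t (\<lambda>s. \<Sum>i\<in>I. a i s) (\<lambda>s. \<Sum>i\<in>I. a' i s)"
  using assms
proof (induction I rule: finite_induct)
  case empty
  show ?case using indef_integral_on_const[of t 0] by simp
next
  case (insert i I)
  then show ?case by (simp add: indef_integral_on_add)
qed

lemma indef_integral_on_unique_AE:
  assumes "indef_integral_on t a a1" "indef_integral_on t a a2"
  shows "AE s in lebesgue. s \<in> {0..t} \<longrightarrow> a1 s = a2 s"
proof -
  have "set_integrable lebesgue {0..t} (\<lambda>s. a1 s - a2 s)"
    using assms by (intro set_integral_diff indef_integral_on_integrable)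
  moreover have "(LINT u:{0..s}|lebesgue. a1 u - a2 u) = 0" if s: "s \<in> {0..t}" for s
  proof -
    have "set_integrable lebesgue {0..s} a1" "set_integrable lebesgue {0..s} a2"
      using s by (auto intro!: set_integrable_subset[OF indef_integral_on_integrable] assms)
    then have "(LINT u:{0..s}|lebesgue. a1 u - a2 u)
        = (LINT u:{0..s}|lebesgue. a1 u) - (LINT u:{0..s}|lebesgue. a2 u)"
      by (rule set_integral_diff(2))
    then show ?thesis
      using indef_integral_on_eq[OF assms(1) s] indef_integral_on_eq[OF assms(2) s] by linarith
  qed
  ultimately have "AE s in lebesgue. s \<in> {0..t} \<longrightarrow> a1 s - a2 s = 0"
    by (intro AE_zero_if_indefinite_integrals_zero) auto
  then show ?thesis by (rule eventually_mono) simp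
qed

lemma integral_by_parts_indef_integral_on:
  assumes "0 \<le> t" and a: "indef_integral_on t a a'" and b: "indef_integral_on t b b'"
  shows "(LINT s:{0..t}|lebesgue. a' s * b s + a s * b' s) = a t * b t - a 0 * b 0"
proof -
  define \<alpha> where "\<alpha> s = indicator {0..t} s * a' s" for s
  define \<beta> where "\<beta> s = indicator {0..t} s * b' s" for s
  have \<alpha>: "integrable lebesgue \<alpha>" and \<beta>: "integrable lebesgue \<beta>"
    using a b by (auto simp: \<alpha>_def[abs_def] \<beta>_def[abs_def] set_integrable_def
        dest: indef_integral_on_integrable)
  \<comment> \<open>Open ray for a, closed ray for b: the two triangles then partition the square.\<close>
  define A where "A s = (\<integral>u. \<alpha> u * indicator {..<s} u \<partial>lebesgue)" for s
  define B where "B s = (\<integral>u. \<beta> u * indicator {..s} u \<partial>lebesgue)" for s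
  have B_eq: "b s = b 0 + B s" if "s \<in> {0..t}" for s
  proof -
    have "(LINT u:{0..s}|lebesgue. b' u) = B s"
      unfolding set_lebesgue_integral_def B_def \<beta>_def
      by (intro Bochner_Integration.integral_cong) (use that in \<open>auto split: split_indicator\<close>)
    then show ?thesis using indef_integral_on_eq[OF b that] by simp
  qed
  have A_eq: "a s = a 0 + A s" if "s \<in> {0..t}" for s
  proof -
    have "(LINT u:{0..s}|lebesgue. a' u) = (\<integral>u. \<alpha> u * indicator {..s} u \<partial>lebesgue)"
      unfolding set_lebesgue_integral_def \<alpha>_def
      by (intro Bochner_Integration.integral_cong) (use that in \<open>auto split: split_indicator\<close>)
    also have "\<dots> = A s"
      unfolding A_def using borel_measurable_integrable[OF \<alpha>] AE_completion[OF AE_lborel_singleton[of s]]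
      by (intro integral_cong_AE)
        (auto intro!: borel_measurable_times borel_measurable_indicator split: split_indicator)
    finally show ?thesis using indef_integral_on_eq[OF a that] by simp
  qed
  note split = integral_mult_integral_eq_triangles[OF \<alpha> \<beta>, folded A_def B_def]
  have "indicator {0..t} s * (a' s * b s + a s * b' s)
      = (b 0 * \<alpha> s + \<alpha> s * B s) + (a 0 * \<beta> s + \<beta> s * A s)" for s
  proof (cases "s \<in> {0..t}")
    case True
    then show ?thesis using A_eq[OF True] B_eq[OF True] by (simp add: \<alpha>_def \<beta>_def algebra_simps)
  qed (simp add: \<alpha>_def \<beta>_def)
  then have "(LINT s:{0..t}|lebesgue. a' s * b s + a s * b' s)
      = (\<integral>s. (b 0 * \<alpha> s + \<alpha> s * B s) + (a 0 * \<beta> s + \<beta> s * A s) \<partial>lebesgue)"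
    by (simp add: set_lebesgue_integral_def)
  also have "\<dots> = b 0 * (\<integral>s. \<alpha> s \<partial>lebesgue) + a 0 * (\<integral>s. \<beta> s \<partial>lebesgue)
      + (\<integral>s. \<alpha> s \<partial>lebesgue) * (\<integral>s. \<beta> s \<partial>lebesgue)"
    using \<alpha> \<beta> split by simp
  also have "\<dots> = a t * b t - a 0 * b 0"
  proof -
    have "t \<in> {0..t}" using \<open>0 \<le> t\<close> by simp
    then have "a t = a 0 + (\<integral>s. \<alpha> s \<partial>lebesgue)" "b t = b 0 + (\<integral>s. \<beta> s \<partial>lebesgue)"
      using indef_integral_on_eq[OF a \<open>t \<in> {0..t}\<close>] indef_integral_on_eq[OF b \<open>t \<in> {0..t}\<close>]
      by (simp_all add: set_lebesgue_integral_def \<alpha>_def[abs_def] \<beta>_def[abs_def])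
    then show ?thesis by (simp add: algebra_simps)
  qed
  finally show ?thesis .
qed

lemma indef_integral_on_mult:
  assumes a: "indef_integral_on t a a'" and b: "indef_integral_on t b b'"
  shows "indef_integral_on t (\<lambda>s. a s * b s) (\<lambda>s. a' s * b s + a s * b' s)"
  unfolding indef_integral_on_def
proof (intro conjI ballI)
  have "set_integrable lebesgue {0..t} (\<lambda>s. g s * f s)"
    if "set_integrable lebesgue {0..t} f" "continuous_on {0..t} g" for f g :: "real \<Rightarrow> real"
    using that compact_continuous_image[OF that(2)]
    by (intro absolutely_integrable_bounded_measurable_product_real continuous_imp_measurable_on_sets_lebesgue)
      (auto intro: compact_imp_bounded)
  then have "set_integrable lebesgue {0..t} (\<lambda>s. b s * a' s)" "set_integrable lebesgue {0..t} (\<lambda>s. a s * b' s)"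
    using a b by (auto intro: indef_integral_on_continuous indef_integral_on_integrable)
  then show "set_integrable lebesgue {0..t} (\<lambda>s. a' s * b s + a s * b' s)"
    by (simp add: mult.commute)
  fix s assume s: "s \<in> {0..t}"
  have "(LINT u:{0..s}|lebesgue. a' u * b u + a u * b' u) = a s * b s - a 0 * b 0"
    using s indef_integral_on_subinterval[OF a] indef_integral_on_subinterval[OF b]
    by (intro integral_by_parts_indef_integral_on) auto
  then show "a s * b s = a 0 * b 0 + (LINT u:{0..s}|lebesgue. a' u * b u + a u * b' u)"
    by simp
qed

lemma H1_imp_indef_integral_on_inner:
  fixes V V' :: "real \<Rightarrow> 'a::euclidean_space"
  assumes "H1 t V V'" "0 \<le> t"
  shows "indef_integral_on t (\<lambda>s. V s \<bullet> e) (\<lambda>s. V' s \<bullet> e)"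
  unfolding indef_integral_on_def
proof (intro conjI ballI)
  have V': "set_integrable lebesgue {0..s} V'" and V: "V s = V 0 + (LINT u:{0..s}|lebesgue. V' u)"
    if "s \<in> {0..t}" for s
    using assms that unfolding H1_def by blast+
  have inner_V': "set_integrable lebesgue {0..s} (\<lambda>u. V' u \<bullet> e)"
    "(LINT u:{0..s}|lebesgue. V' u \<bullet> e) = (LINT u:{0..s}|lebesgue. V' u) \<bullet> e"
    if "s \<in> {0..t}" for s
    using integrable_inner_left[OF V'[OF that, unfolded set_integrable_def], of e]
      integral_inner_left[OF V'[OF that, unfolded set_integrable_def], of e]
    by (simp_all add: set_integrable_def set_lebesgue_integral_def)
  show "set_integrable lebesgue {0..t} (\<lambda>s. V' s \<bullet> e)"
    using assms(2) by (intro inner_V') auto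
  fix s assume s: "s \<in> {0..t}"
  show "V s \<bullet> e = V 0 \<bullet> e + (LINT u:{0..s}|lebesgue. V' u \<bullet> e)"
    using V[OF s] inner_V'(2)[OF s] by (simp add: inner_add_left)
qed

lemma H1_imp_indef_integral_on:
  fixes f f' :: "real \<Rightarrow> real"
  shows "H1 t f f' \<Longrightarrow> 0 \<le> t \<Longrightarrow> indef_integral_on t f f'"
  using H1_imp_indef_integral_on_inner[of t f f' 1] by simp

lemma has_vector_derivative_imp_indef_integral_on_inner:
  fixes y y' :: "real \<Rightarrow> 'a::euclidean_space"
  assumes y: "\<And>s. s \<in> {0..t} \<Longrightarrow> (y has_vector_derivative y' s) (at s within {0..t})"
    and y': "continuous_on {0..t} y'"
  shows "indef_integral_on t (\<lambda>s. y s \<bullet> e) (\<lambda>s. y' s \<bullet> e)"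
  unfolding indef_integral_on_def
proof (intro conjI ballI)
  have y'e: "continuous_on {0..s} (\<lambda>u. y' u \<bullet> e)" if "s \<le> t" for s
    using that by (intro continuous_intros continuous_on_subset[OF y']) auto
  then show "set_integrable lebesgue {0..t} (\<lambda>s. y' s \<bullet> e)"
    by (simp add: absolutely_integrable_continuous_real)
  fix s assume s: "s \<in> {0..t}"
  have "((\<lambda>u. y' u \<bullet> e) has_integral (y s \<bullet> e - y 0 \<bullet> e)) {0..s}"
  proof (rule fundamental_theorem_of_calculus)
    fix u assume "u \<in> {0..s}"
    then have "(y has_vector_derivative y' u) (at u within {0..s})"
      using s by (intro has_vector_derivative_within_subset[OF y]) auto
    then show "((\<lambda>u. y u \<bullet> e) has_vector_derivative y' u \<bullet> e) (at u within {0..s})"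
      by (rule bounded_linear.has_vector_derivative[OF bounded_linear_inner_left])
  qed (use s in auto)
  moreover have "(LINT u:{0..s}|lebesgue. y' u \<bullet> e) = integral {0..s} (\<lambda>u. y' u \<bullet> e)"
    using s y'e by (intro set_lebesgue_integral_eq_integral(2) absolutely_integrable_continuous_real) auto
  ultimately show "y s \<bullet> e = y 0 \<bullet> e + (LINT u:{0..s}|lebesgue. y' u \<bullet> e)"
    by (simp add: integral_unique)
qed

lemma indef_integral_on_inner:
  fixes V V' Z Z' :: "real \<Rightarrow> 'a::euclidean_space"
  assumes V: "\<And>e. indef_integral_on t (\<lambda>s. V s \<bullet> e) (\<lambda>s. V' s \<bullet> e)"
    and Z: "\<And>e. indef_integral_on t (\<lambda>s. Z s \<bullet> e) (\<lambda>s. Z' s \<bullet> e)"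
  shows "indef_integral_on t (\<lambda>s. V s \<bullet> Z s) (\<lambda>s. V' s \<bullet> Z s + V s \<bullet> Z' s)"
proof -
  have "indef_integral_on t (\<lambda>s. \<Sum>b\<in>Basis. (V s \<bullet> b) * (Z s \<bullet> b))
      (\<lambda>s. \<Sum>b\<in>Basis. (V' s \<bullet> b) * (Z s \<bullet> b) + (V s \<bullet> b) * (Z' s \<bullet> b))"
    by (intro indef_integral_on_sum indef_integral_on_mult V Z) simp
  then show ?thesis
    by (simp add: euclidean_inner[symmetric] sum.distrib)
qed

lemma indef_integral_on_gform:
  fixes V V' Z Z' :: "real \<Rightarrow> real^'n"
  assumes V: "\<And>e. indef_integral_on t (\<lambda>s. V s \<bullet> e) (\<lambda>s. V' s \<bullet> e)"
    and Z: "\<And>e. indef_integral_on t (\<lambda>s. Z s \<bullet> e) (\<lambda>s. Z' s \<bullet> e)"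
  shows "indef_integral_on t (\<lambda>s. gform G (V s) (Z s)) (\<lambda>s. gform G (V' s) (Z s) + gform G (V s) (Z' s))"
proof -
  have "(G *v z) \<bullet> e = z \<bullet> (e v* G)" for z e
    by (metis dot_lmul_matrix inner_commute)
  then have "indef_integral_on t (\<lambda>s. (G *v Z s) \<bullet> e) (\<lambda>s. (G *v Z' s) \<bullet> e)" for e
    using Z[of "e v* G"] by simp
  then show ?thesis
    unfolding gform_def by (rule indef_integral_on_inner[OF V])
qed

lemma H1_scaleR_deriv_AE:
  fixes W W' Y Y' :: "real \<Rightarrow> 'a::euclidean_space"
  assumes W: "H1 t W W'" "0 \<le> t" and f: "indef_integral_on t f f'"
    and Y: "\<And>e. indef_integral_on t (\<lambda>s. Y s \<bullet> e) (\<lambda>s. Y' s \<bullet> e)"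
    and W_eq: "\<And>s. s \<in> {0..t} \<Longrightarrow> W s = f s *\<^sub>R Y s"
  shows "AE s in lebesgue. s \<in> {0..t} \<longrightarrow> W' s = f' s *\<^sub>R Y s + f s *\<^sub>R Y' s"
proof -
  have "AE s in lebesgue. s \<in> {0..t} \<longrightarrow> W' s \<bullet> e = (f' s *\<^sub>R Y s + f s *\<^sub>R Y' s) \<bullet> e" for e
  proof -
    have "indef_integral_on t (\<lambda>s. W s \<bullet> e) (\<lambda>s. f' s * (Y s \<bullet> e) + f s * (Y' s \<bullet> e))"
      by (rule indef_integral_on_cong[OF indef_integral_on_mult[OF f Y]]) (simp_all add: W_eq)
    from indef_integral_on_unique_AE[OF H1_imp_indef_integral_on_inner[OF W] this]
    show ?thesis by (simp add: inner_add_left)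
  qed
  then have "AE s in lebesgue. \<forall>e\<in>Basis. s \<in> {0..t} \<longrightarrow> W' s \<bullet> e = (f' s *\<^sub>R Y s + f s *\<^sub>R Y' s) \<bullet> e"
    by (intro eventually_ball_finite) auto
  then show ?thesis
    by (rule eventually_mono) (auto intro: euclidean_eqI)
qed

lemma set_lebesgue_integral_cong_AE_integrable:
  fixes f g :: "'a::euclidean_space \<Rightarrow> 'b::euclidean_space"
  assumes g: "set_integrable lebesgue A g" and fg: "AE x in lebesgue. x \<in> A \<longrightarrow> f x = g x"
  shows "(LINT x:A|lebesgue. f x) = (LINT x:A|lebesgue. g x)"
proof -
  have gA: "(\<lambda>x. indicator A x *\<^sub>R g x) \<in> borel_measurable lebesgue"
    using g by (simp add: set_integrable_def)
  have "AE x in lebesgue. indicator A x *\<^sub>R g x = indicator A x *\<^sub>R f x"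
    using fg by (rule eventually_mono) (simp split: split_indicator)
  then have fA: "(\<lambda>x. indicator A x *\<^sub>R f x) \<in> borel_measurable lebesgue"
    by (rule borel_measurable_AE[OF gA])
  have "AE x in lebesgue. indicator A x *\<^sub>R f x = indicator A x *\<^sub>R g x"
    using fg by (rule eventually_mono) (simp split: split_indicator)
  then show ?thesis
    unfolding set_lebesgue_integral_def by (rule integral_cong_AE[OF fA gA])
qed

lemma gform_add_right: "gform G x (y + z) = gform G x y + gform G x z"
  by (simp add: gform_def matrix_vector_right_distrib inner_add_right)

lemma gform_scaleR_right: "gform G x (a *\<^sub>R y) = a * gform G x y"
  by (simp add: gform_def matrix_vector_mult_scaleR)

lemma gform_zero_right: "gform G x 0 = 0"
  by (simp add: gform_def)

lemma Jacobi_solution_indef_integral_on: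
  fixes R :: "real \<Rightarrow> real^'n^'n" and Y Y' :: "real \<Rightarrow> real^'n"
  assumes Rcont: "continuous_on {0..1} R"
    and Yd: "\<forall>s\<in>{0..1}. (Y has_vector_derivative Y' s) (at s within {0..1})"
    and Ydd: "\<forall>s\<in>{0..1}. (Y' has_vector_derivative (R s *v Y s)) (at s within {0..1})"
    and "t \<le> 1"
  shows "indef_integral_on t (\<lambda>s. Y s \<bullet> e) (\<lambda>s. Y' s \<bullet> e)"
    and "indef_integral_on t (\<lambda>s. Y' s \<bullet> e) (\<lambda>s. (R s *v Y s) \<bullet> e)"
proof -
  have "continuous_on {0..1} Y" "continuous_on {0..1} Y'"
    using Yd Ydd by (auto simp: continuous_on_eq_continuous_within intro: has_vector_derivative_continuous)
  then have "continuous_on {0..1} (\<lambda>s. R s *v Y s)"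
    unfolding matrix_vector_mult_def by (intro continuous_intros Rcont)
  then have "indef_integral_on 1 (\<lambda>s. Y s \<bullet> e) (\<lambda>s. Y' s \<bullet> e)"
    and "indef_integral_on 1 (\<lambda>s. Y' s \<bullet> e) (\<lambda>s. (R s *v Y s) \<bullet> e)"
    using Yd Ydd \<open>continuous_on {0..1} Y'\<close>
    by (auto intro!: has_vector_derivative_imp_indef_integral_on_inner)
  then show "indef_integral_on t (\<lambda>s. Y s \<bullet> e) (\<lambda>s. Y' s \<bullet> e)"
    and "indef_integral_on t (\<lambda>s. Y' s \<bullet> e) (\<lambda>s. (R s *v Y s) \<bullet> e)"
    using indef_integral_on_subinterval \<open>t \<le> 1\<close> by blast+
qed

lemma gform_Jacobi_integrand_eq:
  assumes "\<forall>x y. gform G (R *v x) y = gform G x (R *v y)"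
    and "W' = f' *\<^sub>R Y + f *\<^sub>R Y'" and "gform G V' Y - gform G V Y' = c"
  shows "gform G V' W' + gform G (R *v V) (f *\<^sub>R Y)
    = (f' * gform G V Y' + f * (gform G V' Y' + gform G V (R *v Y))) + c * f'"
  using assms by (simp add: gform_add_right gform_scaleR_right algebra_simps)

lemma It_eq_0_if_Ksp_Ssp:
  fixes G :: "real^'n^'n" and R :: "real \<Rightarrow> real^'n^'n" and Y Y' :: "real \<Rightarrow> real^'n"
  assumes Rcont: "continuous_on {0..1} R"
    and Rsym: "\<forall>s\<in>{0..1}. \<forall>x y. gform G (R s *v x) y = gform G x (R s *v y)"
    and Yd: "\<forall>s\<in>{0..1}. (Y has_vector_derivative Y' s) (at s within {0..1})"
    and Ydd: "\<forall>s\<in>{0..1}. (Y' has_vector_derivative (R s *v Y s)) (at s within {0..1})"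
    and t: "0 \<le> t" "t \<le> 1" and V: "Ksp G P Y Y' t V V'" and W: "Ssp Y t W W'"
  shows "It G R S t V V' W W' = 0"
proof -
  note Y = Jacobi_solution_indef_integral_on[OF Rcont Yd Ydd t(2)]
  obtain c where c: "AE s in lebesgue. s \<in> {0..t} \<longrightarrow> gform G (V' s) (Y s) - gform G (V s) (Y' s) = c"
    using V unfolding Ksp_def by blast
  obtain f f' where f: "indef_integral_on t f f'" and f_0: "f 0 = 0" and f_t: "f t = 0"
    and W_eq: "\<forall>s\<in>{0..t}. W s = f s *\<^sub>R Y s"
    using W t(1) unfolding Ssp_def by (blast dest: H1_imp_indef_integral_on)
  have "H1 t W W'" using W unfolding Ssp_def by blast
  then have W': "AE s in lebesgue. s \<in> {0..t} \<longrightarrow> W' s = f' s *\<^sub>R Y s + f s *\<^sub>R Y' s"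
    by (rule H1_scaleR_deriv_AE[OF _ t(1) f Y(1)]) (use W_eq in blast)
  define h where "h s = gform G (V s) (Y' s)" for s
  define h' where "h' s = gform G (V' s) (Y' s) + gform G (V s) (R s *v Y s)" for s
  have "indef_integral_on t h h'"
    unfolding h_def[abs_def] h'_def[abs_def]
    using V t unfolding Ksp_def Hsp_def
    by (intro indef_integral_on_gform Y(2) H1_imp_indef_integral_on_inner) auto
  then have fh: "indef_integral_on t (\<lambda>s. f s * h s) (\<lambda>s. f' s * h s + f s * h' s)"
    by (rule indef_integral_on_mult[OF f])
  have "AE s in lebesgue. s \<in> {0..t} \<longrightarrow>
      gform G (V' s) (W' s) + gform G (R s *v V s) (W s) = (f' s * h s + f s * h' s) + c * f' s"
    using W' c
  proof eventually_elim
    case (elim s)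
    show ?case
    proof
      assume s: "s \<in> {0..t}"
      then have "\<forall>x y. gform G (R s *v x) y = gform G x (R s *v y)"
        using Rsym t by simp
      from gform_Jacobi_integrand_eq[OF this] elim s W_eq
      show "gform G (V' s) (W' s) + gform G (R s *v V s) (W s)
          = (f' s * h s + f s * h' s) + c * f' s"
        unfolding h_def h'_def by simp
    qed
  qed
  then have "(LINT s:{0..t}|lebesgue. gform G (V' s) (W' s) + gform G (R s *v V s) (W s))
      = (LINT s:{0..t}|lebesgue. (f' s * h s + f s * h' s) + c * f' s)"
    using fh f
    by (intro set_lebesgue_integral_cong_AE_integrable set_integral_add set_integrable_mult_right
        indef_integral_on_integrable)
  also have "\<dots> = (f t * h t - f 0 * h 0) + c * (f t - f 0)"
    using indef_integral_on_eq[OF fh, of t] indef_integral_on_eq[OF f, of t] t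
      indef_integral_on_integrable[OF fh] indef_integral_on_integrable[OF f]
    by (simp add: set_integral_add)
  finally show ?thesis
    using W_eq f_0 f_t t by (simp add: It_def gform_zero_right)
qed

lemma C0_eq_0_if_Khat0_Shat0:
  assumes V: "Khat0 G P Y V V'" and W: "Shat0 Y W W'"
  shows "C0 G V' W' = 0"
proof -
  obtain c where c: "AE u in lebesgue. u \<in> {0..1} \<longrightarrow> gform G (V' u) (Y 0) = c"
    using V unfolding Khat0_def by blast
  obtain f f' where f: "indef_integral_on 1 f f'" and f_0: "f 0 = 0" and f_1: "f 1 = 0"
    and W_eq: "\<forall>u\<in>{0..1}. W u = f u *\<^sub>R Y 0"
    using W unfolding Shat0_def by (blast dest: H1_imp_indef_integral_on[OF _ zero_le_one])
  have Y: "indef_integral_on 1 (\<lambda>u. Y 0 \<bullet> e) (\<lambda>u. 0 \<bullet> e)" for e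
    using indef_integral_on_const by simp
  have "H1 1 W W'" using W unfolding Shat0_def by blast
  then have "AE u in lebesgue. u \<in> {0..1} \<longrightarrow> W' u = f' u *\<^sub>R Y 0 + f u *\<^sub>R 0"
    by (rule H1_scaleR_deriv_AE[OF _ _ f Y]) (use W_eq in auto)
  with c have "AE u in lebesgue. u \<in> {0..1} \<longrightarrow> gform G (V' u) (W' u) = c * f' u"
    by eventually_elim (auto simp: gform_scaleR_right)
  then have "C0 G V' W' = (LINT u:{0..1}|lebesgue. c * f' u)"
    unfolding C0_def using indef_integral_on_integrable[OF f]
    by (intro set_lebesgue_integral_cong_AE_integrable set_integrable_mult_right)
  also have "\<dots> = c * (f 1 - f 0)"
    using indef_integral_on_eq[OF f, of 1] by simp
  finally show ?thesis using f_0 f_1 by simp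
qed

theorem lemma4p7:
  fixes G :: "real^'n^'n"
    and R :: "real \<Rightarrow> real^'n^'n"
    and P :: "(real^'n) set"
    and S :: "real^'n \<Rightarrow> real^'n"
    and Y Y' :: "real \<Rightarrow> real^'n"
  assumes g: "sym_bilinear_nondeg G"
    and idx: "neg_index G = 1"
    and Rcont: "continuous_on {0..1} R"
    and Rsym: "\<forall>s\<in>{0..1}. \<forall>x y. gform G (R s *v x) y = gform G x (R s *v y)"
    and Psub: "subspace P"
    and Pnd: "\<forall>x\<in>P. (\<forall>y\<in>P. gform G x y = 0) \<longrightarrow> x = 0"
    and Slin: "linear S"
    and SP: "\<forall>x\<in>P. S x \<in> P"
    and Ssym: "\<forall>x\<in>P. \<forall>y\<in>P. gform G (S x) y = gform G x (S y)"
    and Yd: "\<forall>s\<in>{0..1}. (Y has_vector_derivative Y' s) (at s within {0..1})"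
    and Ydd: "\<forall>s\<in>{0..1}. (Y' has_vector_derivative (R s *v Y s)) (at s within {0..1})"
    and Yneg: "\<forall>s\<in>{0..1}. gform G (Y s) (Y s) < 0"
  shows "(\<forall>t\<in>{0<..1}. \<forall>V V' W W'. Ksp G P Y Y' t V V' \<and> Ssp Y t W W'
            \<longrightarrow> It G R S t V V' W W' = 0)
       \<and> (\<forall>V V' W W'. Khat0 G P Y V V' \<and> Shat0 Y W W' \<longrightarrow> C0 G V' W' = 0)"
proof (intro conjI ballI allI impI)
  fix t V V' W W'
  assume "t \<in> {0<..1}" and "Ksp G P Y Y' t V V' \<and> Ssp Y t W W'"
  then show "It G R S t V V' W W' = 0"
    by (intro It_eq_0_if_Ksp_Ssp[OF Rcont Rsym Yd Ydd]) auto
next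
  fix V V' W W'
  assume "Khat0 G P Y V V' \<and> Shat0 Y W W'"
  then show "C0 G V' W' = 0"
    by (intro C0_eq_0_if_Khat0_Shat0) auto
qed

end
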